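(* Let $E\subset\mathbb{R}^n$ be an ellipsoid with $\mathrm{vol}(E)<1$. Then $\mathrm{width}(E)\le n$.
   Context: An ellipsoid is a set $\{x\in\mathbb{R}^n: (x-a)^\top (AA^\top)^{-1}(x-a)\le 1\}$ with $A\in\mathbb{R}^{n\times n}$ non-singular and $a\in\mathbb{R}^n$. For a closed set $P$ and $c\in\mathbb{R}^n$, $\mathrm{width}_c(P)=\max_{x\in P}c^\top x-\min_{x\in P}c^\top x$; the lattice width is $\mathrm{width}(P)=\min\{\mathrm{width}_c(P): c\in\mathbb{Z}^n\setminus\{0\}\}$. *)

theory Defs
  imports "HOL-Analysis.Analysis"
begin

definition ellipsoid :: "real^'n^'n \<Rightarrow> real^'n \<Rightarrow> (real^'n) set" where
  "ellipsoid A a = {x. (x - a) \<bullet> (matrix_inv (A ** transpose A) *v (x - a)) \<le> 1}"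

definition width_dir :: "(real^'n) set \<Rightarrow> real^'n \<Rightarrow> real" where
  "width_dir P c = (SUP x\<in>P. c \<bullet> x) - (INF x\<in>P. c \<bullet> x)"

definition int_vectors :: "(real^'n) set" where
  "int_vectors = {c. \<forall>i. c $ i \<in> \<int>}"

definition lattice_width :: "(real^'n) set \<Rightarrow> real" where
  "lattice_width P = Inf (width_dir P ` (int_vectors - {0}))"

end

theory Submission
  imports Defs
begin

text \<open>
  Write the ellipsoid as \<open>E = a + A B\<close> with \<open>B\<close> the closed unit ball. The cube of
  half-side \<open>1/\<surd>n\<close> lies in \<open>B\<close>, so \<open>|det A| (2/\<surd>n)\<^sup>n \<le> vol E < 1\<close>. Hence
  the image of the cube of half-side \<open>\<surd>n/4\<close> under the dual map \<open>A\<^sup>-\<^sup>T\<close> has volume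
  \<open>|det A|\<^sup>-\<^sup>1 (\<surd>n/2)\<^sup>n > 1\<close>, and Blichfeldt's theorem yields two of its points whose
  difference \<open>c\<close> is a nonzero integer vector. Then \<open>A\<^sup>T c\<close> is a difference of two points
  of that cube, so \<open>\<parallel>A\<^sup>T c\<parallel> \<le> n/2\<close>, while the width of \<open>E\<close> in direction \<open>c\<close> is
  \<open>2 \<parallel>A\<^sup>T c\<parallel>\<close>.
\<close>

section \<open>Volume of linear images in \<open>real^'n\<close>\<close>

lemma compact_matrix_vector_image:
  fixes M :: "real^'m^'n"
  assumes "compact S"
  shows "compact ((*v) M ` S)"
  using assms by (intro compact_continuous_image linear_continuous_on
      linear_conv_bounded_linear[THEN iffD1] matrix_vector_mul_linear)

lemma emeasure_lborel_box_cart: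
  fixes l u :: "real^'n"
  assumes "l \<le> u"
  shows "emeasure lborel (box l u) = (\<Prod>i\<in>UNIV. u $ i - l $ i)"
proof -
  have "cbox l u \<noteq> {}" using assms by (simp add: interval_cbox_cart[symmetric])
  moreover have "\<forall>b\<in>Basis. l \<bullet> b \<le> u \<bullet> b" using assms by (simp add: eucl_le[symmetric])
  ultimately show ?thesis
    using content_cbox_cart[of l u] content_cbox[of l u]
    by (simp add: emeasure_lborel_box_eq inner_diff_left prod_nonneg)
qed

text \<open>
  The library proves \<open>measure_linear_image\<close> only for well-ordered index types. A general finite
  index type is transported to the following copy of itself, well-ordered through \<open>to_nat\<close>.
\<close>

typedef 'a ordered_index = "UNIV :: 'a set" by simp

instance ordered_index :: (finite) finite
proof
  have "(UNIV :: 'a ordered_index set) = Abs_ordered_index ` UNIV"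
    by (metis Abs_ordered_index_cases surj_def)
  then show "finite (UNIV :: 'a ordered_index set)" by (metis finite finite_imageI)
qed

instantiation ordered_index :: (finite) linorder
begin
definition "x \<le> y \<longleftrightarrow> to_nat (Rep_ordered_index x) \<le> to_nat (Rep_ordered_index y)"
definition "x < y \<longleftrightarrow> to_nat (Rep_ordered_index x) < to_nat (Rep_ordered_index y)"
instance
  by standard
    (auto simp: less_eq_ordered_index_def less_ordered_index_def Rep_ordered_index_inject)
end

instance ordered_index :: (finite) wellorder
proof
  fix P :: "'a ordered_index \<Rightarrow> bool" and x
  assume step: "\<And>x. (\<And>y. y < x \<Longrightarrow> P y) \<Longrightarrow> P x"
  have "\<forall>x. to_nat (Rep_ordered_index x) = n \<longrightarrow> P x" for n
    by (induction n rule: less_induct) (use step in \<open>auto simp: less_ordered_index_def\<close>)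
  then show "P x" by blast
qed

lemma bij_Rep_ordered_index: "bij Rep_ordered_index"
  by (metis Abs_ordered_index_inverse Rep_ordered_index_inverse UNIV_I bij_iff)

lemma bij_Abs_ordered_index: "bij Abs_ordered_index"
  by (metis Abs_ordered_index_inverse Rep_ordered_index_inverse UNIV_I bij_iff)

definition ordered_vec :: "'a^'n \<Rightarrow> 'a^'n ordered_index" where
  "ordered_vec x = (\<chi> i. x $ Rep_ordered_index i)"

definition ordered_mat :: "'a^'n^'n \<Rightarrow> 'a^'n ordered_index^'n ordered_index" where
  "ordered_mat M = (\<chi> i j. M $ Rep_ordered_index i $ Rep_ordered_index j)"

lemma ordered_mat_mult_vec:
  fixes M :: "'a::semiring_1^'n::finite^'n"
  shows "ordered_mat M *v ordered_vec x = ordered_vec (M *v x)"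
  by (simp add: vec_eq_iff ordered_mat_def ordered_vec_def matrix_vector_mult_def
      sum.reindex_bij_betw[OF bij_Rep_ordered_index, of "\<lambda>k. M $ _ $ k * x $ k"])

lemma det_ordered_mat:
  fixes M :: "'a::comm_ring_1^'n::finite^'n"
  shows "det (ordered_mat M) = det M"
proof -
  define conj :: "('n \<Rightarrow> 'n) \<Rightarrow> 'n ordered_index \<Rightarrow> 'n ordered_index"
    where "conj p = Abs_ordered_index \<circ> p \<circ> Rep_ordered_index" for p
  have sign_conj: "sign (conj p) = sign p" if "p permutes UNIV" for p
    using permutes_bij_finite.sign_p'[of p UNIV UNIV Abs_ordered_index Rep_ordered_index]
    by (simp add: conj_def comp_def permutes_bij_finite_def permutes_bij_def
        permutes_bij_finite_axioms_def that bij_Abs_ordered_index Abs_ordered_index_inverse)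
  have "bij_betw conj {p. p permutes UNIV} {p. p permutes UNIV}"
  proof (rule bij_betw_byWitness[where f' = "\<lambda>q. Rep_ordered_index \<circ> q \<circ> Abs_ordered_index"])
    show "conj ` {p. p permutes UNIV} \<subseteq> {p. p permutes UNIV}"
      by (auto simp: conj_def intro!: permutes_compose bij_imp_permutes bij_comp
          bij_Rep_ordered_index bij_Abs_ordered_index dest: permutes_bij)
  qed (auto simp: conj_def fun_eq_iff Abs_ordered_index_inverse Rep_ordered_index_inverse
      intro!: bij_imp_permutes bij_comp bij_Rep_ordered_index bij_Abs_ordered_index dest: permutes_bij)
  moreover have "(\<Prod>i\<in>UNIV. ordered_mat M $ i $ conj p i) = (\<Prod>i\<in>UNIV. M $ i $ p i)" for p
    using prod.reindex_bij_betw[OF bij_Rep_ordered_index, of "\<lambda>i. M $ i $ p i"]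
    by (simp add: ordered_mat_def conj_def Abs_ordered_index_inverse)
  ultimately show ?thesis
    unfolding det_def
    by (simp add: sum.reindex_bij_betw[symmetric, where h = conj] sign_conj)
qed

lemma bounded_linear_ordered_vec: "bounded_linear (ordered_vec :: real^'n \<Rightarrow> real^'n ordered_index)"
  by (rule linear_conv_bounded_linear[THEN iffD1], rule linearI) (simp_all add: ordered_vec_def vec_eq_iff)

lemma borel_measurable_ordered_vec:
  "(ordered_vec :: real^'n \<Rightarrow> real^'n ordered_index) \<in> borel_measurable borel"
  by (intro borel_measurable_continuous_onI linear_continuous_on bounded_linear_ordered_vec)

lemma compact_ordered_vec_image:
  fixes S :: "(real^'n) set"
  shows "compact S \<Longrightarrow> compact (ordered_vec ` S)"
  by (rule compact_continuous_image[OF linear_continuous_on[OF bounded_linear_ordered_vec]])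

lemma inj_ordered_vec: "inj ordered_vec"
  by (rule injI) (metis ordered_vec_def vec_eq_iff vec_lambda_beta Abs_ordered_index_inverse UNIV_I)

lemma ordered_vec_vimage_box:
  fixes l u :: "real^'n::finite ordered_index"
  shows "ordered_vec -` box l u = box (\<chi> k. l $ Abs_ordered_index k) (\<chi> k. u $ Abs_ordered_index k)"
proof -
  have "(\<forall>i. l $ i < x $ Rep_ordered_index i \<and> x $ Rep_ordered_index i < u $ i) \<longleftrightarrow>
        (\<forall>k. l $ Abs_ordered_index k < x $ k \<and> x $ k < u $ Abs_ordered_index k)" for x
    by (metis Abs_ordered_index_inverse Rep_ordered_index_inverse UNIV_I)
  then show ?thesis
    by (auto simp: mem_box_cart ordered_vec_def)
qed

lemma lborel_distr_ordered_vec: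
  "distr lborel borel (ordered_vec :: real^'n::finite \<Rightarrow> _) = lborel"
proof (rule lborel_eqI[symmetric])
  fix l u :: "real^'n ordered_index"
  assume "\<And>b. b \<in> Basis \<Longrightarrow> l \<bullet> b \<le> u \<bullet> b"
  then have le: "l \<le> u"
    by (subst eucl_le) blast
  have "emeasure (distr lborel borel ordered_vec) (box l u)
      = emeasure lborel (box (\<chi> k. l $ Abs_ordered_index k) (\<chi> k. u $ Abs_ordered_index k) :: (real^'n) set)"
    by (simp add: emeasure_distr borel_measurable_ordered_vec ordered_vec_vimage_box)
  also have "\<dots> = (\<Prod>k\<in>UNIV. u $ Abs_ordered_index k - l $ Abs_ordered_index k)"
    using le by (subst emeasure_lborel_box_cart) (auto simp: less_eq_vec_def)
  also have "\<dots> = (\<Prod>i\<in>UNIV. u $ i - l $ i)"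
    using prod.reindex_bij_betw[OF bij_Abs_ordered_index, of "\<lambda>i. u $ i - l $ i"] by simp
  also have "\<dots> = emeasure lborel (box l u)"
    using le by (simp add: emeasure_lborel_box_cart)
  finally show "emeasure (distr lborel borel ordered_vec) (box l u) = (\<Prod>b\<in>Basis. (u - l) \<bullet> b)"
    using \<open>\<And>b. b \<in> Basis \<Longrightarrow> l \<bullet> b \<le> u \<bullet> b\<close> by (simp add: emeasure_lborel_box_eq)
qed simp

lemma measure_ordered_vec_image:
  fixes S :: "(real^'n::finite) set"
  assumes "compact S"
  shows "measure lebesgue (ordered_vec ` S) = measure lebesgue S"
proof -
  have "compact (ordered_vec ` S)"
    using assms by (rule compact_ordered_vec_image)
  then have "measure lebesgue (ordered_vec ` S) = measure (distr lborel borel ordered_vec) (ordered_vec ` S)"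
    by (simp add: lborel_distr_ordered_vec measure_completion borel_compact)
  also have "\<dots> = measure lborel (ordered_vec -` ordered_vec ` S)"
    by (subst measure_distr)
      (auto simp: borel_compact \<open>compact (ordered_vec ` S)\<close> borel_measurable_ordered_vec)
  also have "\<dots> = measure lebesgue S"
    using assms by (simp add: inj_vimage_image_eq[OF inj_ordered_vec] measure_completion borel_compact)
  finally show ?thesis .
qed

lemma measure_linear_image_cart:
  fixes M :: "real^'n::finite^'n"
  assumes "compact S"
  shows "measure lebesgue ((*v) M ` S) = \<bar>det M\<bar> * measure lebesgue S"
proof -
  have "measure lebesgue ((*v) M ` S) = measure lebesgue (ordered_vec ` (*v) M ` S)"
    by (simp add: measure_ordered_vec_image compact_matrix_vector_image assms)
  also have "ordered_vec ` (*v) M ` S = (*v) (ordered_mat M) ` ordered_vec ` S"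
    by (auto simp: image_image ordered_mat_mult_vec)
  also have "measure lebesgue \<dots> = \<bar>det (ordered_mat M)\<bar> * measure lebesgue (ordered_vec ` S)"
    using measure_linear_image[of "(*v) (ordered_mat M)" "ordered_vec ` S"]
    by (simp add: matrix_of_matrix_vector_mul lmeasurable_compact compact_ordered_vec_image assms)
  also have "\<dots> = \<bar>det M\<bar> * measure lebesgue S"
    by (simp add: det_ordered_mat measure_ordered_vec_image assms)
  finally show ?thesis .
qed

lemma norm_le_sqrt_card_mult:
  fixes x :: "real^'n"
  assumes "\<And>i. \<bar>x $ i\<bar> \<le> r"
  shows "norm x \<le> sqrt CARD('n) * r"
proof -
  have "infnorm x \<le> r"
    using assms by (simp add: infnorm_cart cSup_le_iff) (auto intro: cSup_least)
  then show ?thesis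
    using norm_le_infnorm[of x] by (simp add: mult_left_mono order_trans)
qed

definition centered_cube :: "real \<Rightarrow> (real^'n) set" where
  "centered_cube r = cbox (vec (- r)) (vec r)"

lemma compact_centered_cube: "compact (centered_cube r)"
  by (simp add: centered_cube_def)

lemma mem_centered_cube_iff: "u \<in> centered_cube r \<longleftrightarrow> (\<forall>i. \<bar>u $ i\<bar> \<le> r)"
proof -
  have "(- r \<le> x \<and> x \<le> r) \<longleftrightarrow> \<bar>x\<bar> \<le> r" for x :: real
    by linarith
  then show ?thesis
    by (simp add: centered_cube_def mem_box_cart)
qed

lemma norm_le_of_mem_centered_cube:
  fixes u :: "real^'n"
  shows "u \<in> centered_cube r \<Longrightarrow> norm u \<le> sqrt CARD('n) * r"
  by (intro norm_le_sqrt_card_mult) (simp add: mem_centered_cube_iff)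

lemma diff_mem_centered_cube:
  assumes "u \<in> centered_cube r" and "w \<in> centered_cube r"
  shows "u - w \<in> centered_cube (2 * r)"
  unfolding mem_centered_cube_iff
proof
  fix i
  have "\<bar>u $ i\<bar> \<le> r" and "\<bar>w $ i\<bar> \<le> r"
    using assms by (simp_all add: mem_centered_cube_iff)
  then show "\<bar>(u - w) $ i\<bar> \<le> 2 * r"
    using abs_triangle_ineq4[of "u $ i" "w $ i"] by simp
qed

lemma measure_centered_cube:
  assumes "0 \<le> r"
  shows "measure lebesgue (centered_cube r :: (real^'n) set) = (2 * r) ^ CARD('n)"
proof -
  have "cbox (vec (- r)) (vec r :: real^'n) \<noteq> {}"
    using assms by (simp add: box_ne_empty)
  then show ?thesis
    by (simp add: centered_cube_def measure_completion content_cbox_cart)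
qed

lemma measure_matrix_image_centered_cube:
  fixes M :: "real^'n^'n"
  assumes "0 \<le> r"
  shows "measure lebesgue ((*v) M ` centered_cube r) = \<bar>det M\<bar> * (2 * r) ^ CARD('n)"
  by (simp add: measure_linear_image_cart compact_centered_cube measure_centered_cube assms)

lemma centered_cube_subset_cball: "centered_cube (1 / sqrt CARD('n)) \<subseteq> cball (0 :: real^'n) 1"
proof
  fix u :: "real^'n"
  assume "u \<in> centered_cube (1 / sqrt CARD('n))"
  then have "norm u \<le> sqrt CARD('n) * (1 / sqrt CARD('n))"
    by (rule norm_le_of_mem_centered_cube)
  then show "u \<in> cball 0 1"
    by simp
qed

section \<open>Ellipsoids and lattice width\<close>

lemma matrix_mul_matrix_inv:
  assumes "invertible A"
  shows "A ** matrix_inv A = mat 1"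
  using someI_ex[OF assms[unfolded invertible_def]] by (simp add: matrix_inv_def)

lemma matrix_inv_mul_matrix:
  assumes "invertible A"
  shows "matrix_inv A ** A = mat 1"
  using someI_ex[OF assms[unfolded invertible_def]] by (simp add: matrix_inv_def)

lemma matrix_inv_unique:
  fixes A :: "'a::semiring_1^'n^'m"
  assumes "A ** B = mat 1" and "B ** A = mat 1"
  shows "matrix_inv A = B"
proof -
  have "invertible A" using assms unfolding invertible_def by blast
  then have "matrix_inv A = matrix_inv A ** (A ** B)"
    by (simp add: assms(1))
  also have "\<dots> = B"
    by (simp add: matrix_mul_assoc matrix_inv_mul_matrix \<open>invertible A\<close>)
  finally show ?thesis .
qed

lemma matrix_inv_mult_transpose:
  fixes A :: "'a::comm_ring_1^'n^'n"
  assumes "invertible A"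
  shows "matrix_inv (A ** transpose A) = transpose (matrix_inv A) ** matrix_inv A"
proof (rule matrix_inv_unique)
  have "transpose A ** transpose (matrix_inv A) = mat 1"
    by (metis assms matrix_inv_mul_matrix matrix_transpose_mul transpose_mat)
  then show "A ** transpose A ** (transpose (matrix_inv A) ** matrix_inv A) = mat 1"
    by (metis assms matrix_mul_assoc matrix_mul_lid matrix_mul_matrix_inv)
  have "transpose (matrix_inv A) ** transpose A = mat 1"
    by (metis assms matrix_mul_matrix_inv matrix_transpose_mul transpose_mat)
  then show "transpose (matrix_inv A) ** matrix_inv A ** (A ** transpose A) = mat 1"
    by (metis assms matrix_mul_assoc matrix_mul_lid matrix_inv_mul_matrix)
qed

lemma ellipsoid_eq_image_cball:
  fixes A :: "real^'n^'n"
  assumes "invertible A"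
  shows "ellipsoid A a = (\<lambda>u. a + A *v u) ` cball 0 1"
proof -
  let ?B = "matrix_inv A"
  have "x \<in> ellipsoid A a \<longleftrightarrow> norm (?B *v (x - a)) \<le> 1" for x
  proof -
    have "(x - a) \<bullet> (matrix_inv (A ** transpose A) *v (x - a))
        = (x - a) \<bullet> (transpose ?B *v (?B *v (x - a)))"
      by (simp only: matrix_inv_mult_transpose assms matrix_vector_mul_assoc)
    also have "\<dots> = (?B *v (x - a)) \<bullet> (?B *v (x - a))"
      by (metis dot_lmul_matrix inner_commute transpose_matrix_vector)
    finally show ?thesis
      by (simp add: ellipsoid_def dot_square_norm power_le_one_iff)
  qed
  moreover have "norm (?B *v (x - a)) \<le> 1 \<longleftrightarrow> x \<in> (\<lambda>u. a + A *v u) ` cball 0 1" for x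
  proof
    assume "norm (?B *v (x - a)) \<le> 1"
    moreover have "x = a + A *v (?B *v (x - a))"
      by (simp add: matrix_vector_mul_assoc matrix_mul_matrix_inv assms)
    ultimately show "x \<in> (\<lambda>u. a + A *v u) ` cball 0 1" by force
  next
    assume "x \<in> (\<lambda>u. a + A *v u) ` cball 0 1"
    then show "norm (?B *v (x - a)) \<le> 1"
      by (auto simp: matrix_vector_mul_assoc matrix_inv_mul_matrix assms)
  qed
  ultimately show ?thesis by blast
qed

lemma width_dir_le:
  assumes "a \<in> P" and "\<And>x. x \<in> P \<Longrightarrow> \<bar>c \<bullet> x - c \<bullet> a\<bar> \<le> r"
  shows "width_dir P c \<le> 2 * r"
proof -
  have "(SUP x\<in>P. c \<bullet> x) \<le> c \<bullet> a + r"
    by (rule cSUP_least) (use assms in fastforce)+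
  moreover have "c \<bullet> a - r \<le> (INF x\<in>P. c \<bullet> x)"
    by (rule cINF_greatest) (use assms in fastforce)+
  ultimately show ?thesis
    unfolding width_dir_def by linarith
qed

lemma width_dir_nonneg:
  assumes "P \<noteq> {}" and "bounded P"
  shows "0 \<le> width_dir P c"
proof -
  obtain a where "a \<in> P" using assms(1) by blast
  have "bounded ((\<bullet>) c ` P)"
    using assms(2) by (intro bounded_linear_image bounded_linear_inner_right)
  then have "c \<bullet> a \<le> (SUP x\<in>P. c \<bullet> x)" and "(INF x\<in>P. c \<bullet> x) \<le> c \<bullet> a"
    by (auto intro!: cSUP_upper cINF_lower \<open>a \<in> P\<close> bounded_imp_bdd_above bounded_imp_bdd_below)
  then show ?thesis
    unfolding width_dir_def by linarith
qed

lemma lattice_width_le_width_dir: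
  assumes "P \<noteq> {}" and "bounded P" and "c \<in> int_vectors" and "c \<noteq> 0"
  shows "lattice_width P \<le> width_dir P c"
proof -
  have "bdd_below (width_dir P ` (int_vectors - {0}))"
    using width_dir_nonneg[OF assms(1,2)] by (auto intro: bdd_belowI2[of _ 0])
  then show ?thesis
    unfolding lattice_width_def using assms(3,4) by (auto intro: cInf_lower)
qed

lemma width_dir_affine_image_cball:
  fixes A :: "real^'n^'n"
  shows "width_dir ((\<lambda>u. a + A *v u) ` cball 0 1) c \<le> 2 * norm (transpose A *v c)"
proof (rule width_dir_le)
  show "a \<in> (\<lambda>u. a + A *v u) ` cball 0 1"
    by (rule image_eqI[of _ _ 0]) auto
  fix x assume "x \<in> (\<lambda>u. a + A *v u) ` cball 0 1"
  then obtain u where "norm u \<le> 1" and x: "x = a + A *v u" by auto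
  have "c \<bullet> x - c \<bullet> a = (transpose A *v c) \<bullet> u"
    by (simp add: x inner_add_right dot_lmul_matrix[symmetric])
  also have "\<bar>\<dots>\<bar> \<le> norm (transpose A *v c) * norm u"
    by (rule Cauchy_Schwarz_ineq2)
  also have "\<dots> \<le> norm (transpose A *v c)"
    using \<open>norm u \<le> 1\<close> by (simp add: mult_left_le)
  finally show "\<bar>c \<bullet> x - c \<bullet> a\<bar> \<le> norm (transpose A *v c)" .
qed

section \<open>Blichfeldt's theorem\<close>

definition integer_cell :: "('n \<Rightarrow> int) \<Rightarrow> (real^'n) set" where
  "integer_cell k = {x. \<forall>i. \<lfloor>x $ i\<rfloor> = k i}"

lemma integer_cell_borel: "integer_cell k \<in> sets borel"
proof -
  have "integer_cell k = (\<Inter>i. {x. of_int (k i) \<le> x $ i} \<inter> {x. x $ i < of_int (k i) + 1})"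
    by (auto simp: integer_cell_def floor_eq_iff)
  then show ?thesis
    by (auto intro!: sets.finite_INT sets.Int borel_closed borel_open
        closed_halfspace_component_ge_cart open_halfspace_component_lt_cart)
qed

lemma integer_cell_disjoint: "k \<noteq> l \<Longrightarrow> integer_cell k \<inter> integer_cell l = {}"
  by (auto simp: integer_cell_def fun_eq_iff)

lemma diff_of_mem_integer_cell_in_unit_cube:
  assumes "x \<in> integer_cell k"
  shows "x - (\<chi> i. of_int (k i)) \<in> cbox 0 1"
proof -
  have bounds: "of_int (k i) \<le> x $ i \<and> x $ i < of_int (k i) + 1" for i
    using assms by (simp add: integer_cell_def floor_eq_iff)
  have "0 \<le> (x - (\<chi> i. of_int (k i))) $ i \<and> (x - (\<chi> i. of_int (k i))) $ i \<le> 1" for i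
    using bounds[of i] by simp
  then show ?thesis
    by (simp add: mem_box_cart)
qed

lemma finite_integer_cells_meeting_bounded:
  assumes "bounded S"
  shows "finite {k. S \<inter> integer_cell k \<noteq> {}}"
proof -
  obtain R where R: "\<And>x. x \<in> S \<Longrightarrow> norm x \<le> R"
    using assms by (auto simp: bounded_iff)
  have "{k. S \<inter> integer_cell k \<noteq> {}} \<subseteq> PiE UNIV (\<lambda>_. {- \<lceil>R\<rceil>..\<lceil>R\<rceil>})"
  proof
    fix k assume "k \<in> {k. S \<inter> integer_cell k \<noteq> {}}"
    then obtain x where "x \<in> S" and k: "\<And>i. \<lfloor>x $ i\<rfloor> = k i"
      by (auto simp: integer_cell_def)
    have "k i \<in> {- \<lceil>R\<rceil>..\<lceil>R\<rceil>}" for i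
    proof -
      have "\<bar>x $ i\<bar> \<le> R"
        using R[OF \<open>x \<in> S\<close>] component_le_norm_cart[of x i] by linarith
      then show ?thesis
        unfolding k[symmetric] using le_of_int_ceiling[of R]
        by (simp add: le_floor_iff floor_le_iff abs_le_iff del: le_of_int_ceiling)
    qed
    then show "k \<in> PiE UNIV (\<lambda>_. {- \<lceil>R\<rceil>..\<lceil>R\<rceil>})" by auto
  qed
  then show ?thesis
    by (rule finite_subset) (auto intro: finite_PiE)
qed

lemma integer_cell_translates_disjoint:
  fixes S :: "(real^'n) set"
  assumes no_diff: "\<And>x y. x \<in> S \<Longrightarrow> y \<in> S \<Longrightarrow> x - y \<in> int_vectors \<Longrightarrow> x = y"
    and "k \<noteq> l"
  shows "(\<lambda>x. x - (\<chi> i. of_int (k i))) ` (S \<inter> integer_cell k)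
       \<inter> (\<lambda>x. x - (\<chi> i. of_int (l i))) ` (S \<inter> integer_cell l) = {}"
proof (rule ccontr)
  assume "\<not> ?thesis"
  then obtain x y where x: "x \<in> S \<inter> integer_cell k" and y: "y \<in> S \<inter> integer_cell l"
    and eq: "x - (\<chi> i. of_int (k i)) = y - (\<chi> i. of_int (l i))"
    by auto
  have "x - y = (\<chi> i. of_int (k i - l i))"
    using eq by (simp add: vec_eq_iff algebra_simps)
  then have "x - y \<in> int_vectors"
    by (simp add: int_vectors_def)
  then have "x = y"
    using x y no_diff by blast
  then show False
    using x y integer_cell_disjoint[OF \<open>k \<noteq> l\<close>] by blast
qed

lemma measure_le_one_if_no_integer_differences:
  fixes S :: "(real^'n) set"
  assumes "bounded S" and "S \<in> sets lebesgue"
    and no_diff: "\<And>x y. x \<in> S \<Longrightarrow> y \<in> S \<Longrightarrow> x - y \<in> int_vectors \<Longrightarrow> x = y"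
  shows "measure lebesgue S \<le> 1"
proof -
  define K where "K = {k. S \<inter> integer_cell k \<noteq> {}}"
  define P where "P k = S \<inter> integer_cell k" for k
  define T where "T k = (\<lambda>x. x - (\<chi> i. of_int (k i))) ` P k" for k
  have "finite K"
    unfolding K_def using assms(1) by (rule finite_integer_cells_meeting_bounded)
  have "integer_cell k \<in> sets lebesgue" for k
    using integer_cell_borel by (metis sets_completionI_sets sets_lborel)
  then have P: "P k \<in> lmeasurable" for k
    unfolding P_def using assms(1,2)
    by (intro bounded_set_imp_lmeasurable sets.Int) (auto intro: bounded_subset)
  then have T: "T k \<in> lmeasurable" and measure_T: "measure lebesgue (T k) = measure lebesgue (P k)" for k
    unfolding T_def by (auto intro: measurable_translation_subtract simp: measure_translation_subtract)
  have S: "S = (\<Union>k\<in>K. P k)"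
    by (auto simp: K_def P_def integer_cell_def)
  have "disjoint_family_on P K"
    by (auto simp: disjoint_family_on_def P_def dest: integer_cell_disjoint)
  have "disjoint_family_on T K"
    using integer_cell_translates_disjoint[OF no_diff]
    by (auto simp: disjoint_family_on_def T_def P_def)
  have "measure lebesgue S = (\<Sum>k\<in>K. measure lebesgue (P k))"
    unfolding S using \<open>finite K\<close> \<open>disjoint_family_on P K\<close> fmeasurableD[OF P] fmeasurableD2[OF P]
    by (intro measure_finite_Union) auto
  also have "\<dots> = (\<Sum>k\<in>K. measure lebesgue (T k))"
    by (simp add: measure_T)
  also have "\<dots> = measure lebesgue (\<Union>k\<in>K. T k)"
    using \<open>finite K\<close> \<open>disjoint_family_on T K\<close> fmeasurableD[OF T] fmeasurableD2[OF T]
    by (intro measure_finite_Union[symmetric]) auto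
  also have "\<dots> \<le> measure lebesgue (cbox (0::real^'n) 1)"
    using \<open>finite K\<close> T
    by (intro measure_mono_fmeasurable)
      (auto simp: T_def P_def intro: diff_of_mem_integer_cell_in_unit_cube fmeasurableD)
  also have "\<dots> = 1"
  proof -
    have "cbox (0::real^'n) 1 \<noteq> {}"
      using mem_box_cart(2)[of "0::real^'n" 0 1] by auto
    then show ?thesis
      by (simp add: measure_completion content_cbox_cart)
  qed
  finally show ?thesis .
qed

theorem blichfeldt:
  fixes S :: "(real^'n) set"
  assumes "bounded S" and "S \<in> sets lebesgue" and "measure lebesgue S > 1"
  obtains x y where "x \<in> S" and "y \<in> S" and "x \<noteq> y" and "x - y \<in> int_vectors"
  using measure_le_one_if_no_integer_differences[OF assms(1,2)] assms(3) by force

section \<open>A short integer direction\<close>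

lemma measure_dual_image_centered_cube_gt_one:
  fixes A :: "real^'n^'n"
  assumes "invertible A" and "measure lebesgue ((*v) A ` cball 0 1) < 1"
  shows "measure lebesgue ((*v) (transpose (matrix_inv A)) ` centered_cube (sqrt CARD('n) / 4)) > 1"
    (is "measure lebesgue ?S > 1")
proof -
  define t where "t = 1 / sqrt CARD('n)"
  define s where "s = sqrt CARD('n) / 4"
  have "t \<ge> 0" "s \<ge> 0" "(2 * t) * (2 * s) = 1"
    by (simp_all add: t_def s_def)
  have "\<bar>det A\<bar> * (2 * t) ^ CARD('n) = measure lebesgue ((*v) A ` centered_cube t)"
    by (simp add: measure_matrix_image_centered_cube \<open>t \<ge> 0\<close>)
  also have "\<dots> \<le> measure lebesgue ((*v) A ` cball 0 1)"
    using centered_cube_subset_cball unfolding t_def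
    by (intro measure_mono_fmeasurable image_mono fmeasurableD lmeasurable_compact
        compact_matrix_vector_image compact_centered_cube compact_cball)
  also have "\<dots> < 1"
    by fact
  finally have small: "\<bar>det A\<bar> * (2 * t) ^ CARD('n) < 1" .
  have "measure lebesgue ?S * (\<bar>det A\<bar> * (2 * t) ^ CARD('n))
      = \<bar>det (transpose (matrix_inv A)) * det A\<bar> * ((2 * t) * (2 * s)) ^ CARD('n)"
    unfolding s_def[symmetric]
    by (simp only: measure_matrix_image_centered_cube[OF \<open>s \<ge> 0\<close>] abs_mult power_mult_distrib mult_ac)
  also have "\<dots> = 1"
    using \<open>(2 * t) * (2 * s) = 1\<close>
    by (simp add: det_transpose det_mul[symmetric] matrix_inv_mul_matrix assms(1) det_I)
  finally show ?thesis
    using small \<open>t \<ge> 0\<close> by (smt (verit) mult_left_le_one_le measure_nonneg zero_le_mult_iff abs_ge_zero zero_le_power)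
qed

lemma exists_nonzero_int_vector_transpose_norm_le:
  fixes A :: "real^'n^'n"
  assumes "invertible A" and "measure lebesgue ((*v) A ` cball 0 1) < 1"
  obtains c where "c \<in> int_vectors" and "c \<noteq> 0" and "norm (transpose A *v c) \<le> CARD('n) / 2"
proof -
  define s where "s = sqrt CARD('n) / 4"
  define B where "B = transpose (matrix_inv A)"
  have "compact ((*v) B ` centered_cube s)"
    by (intro compact_matrix_vector_image compact_centered_cube)
  moreover have "measure lebesgue ((*v) B ` centered_cube s) > 1"
    unfolding B_def s_def using assms by (rule measure_dual_image_centered_cube_gt_one)
  ultimately obtain x y where "x \<in> (*v) B ` centered_cube s" "y \<in> (*v) B ` centered_cube s"
    and "x \<noteq> y" and "x - y \<in> int_vectors"
    using blichfeldt compact_imp_bounded lmeasurable_compact fmeasurableD by metis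
  then obtain u w where "u \<in> centered_cube s" "w \<in> centered_cube s"
    and "B *v u \<noteq> B *v w" and int: "B *v u - B *v w \<in> int_vectors"
    by blast
  have "transpose A ** B = mat 1"
    by (metis B_def assms(1) matrix_inv_mul_matrix matrix_transpose_mul transpose_mat)
  then have "transpose A *v (B *v u - B *v w) = u - w"
    by (simp add: matrix_vector_mult_diff_distrib matrix_vector_mul_assoc)
  moreover have "norm (u - w) \<le> sqrt CARD('n) * (2 * s)"
    by (intro norm_le_of_mem_centered_cube diff_mem_centered_cube) fact+
  ultimately have "norm (transpose A *v (B *v u - B *v w)) \<le> CARD('n) / 2"
    by (simp add: s_def)
  with int \<open>B *v u \<noteq> B *v w\<close> show thesis
    using that by simp
qed

theorem mainTheorem11:
  fixes A :: "real^'n^'n" and a :: "real^'n"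
  assumes "invertible A"
    and "measure lebesgue (ellipsoid A a) < 1"
  shows "lattice_width (ellipsoid A a) \<le> real CARD('n)"
proof -
  have E: "ellipsoid A a = (+) a ` ((*v) A ` cball 0 1)"
    using ellipsoid_eq_image_cball[OF assms(1)] by (simp add: image_image)
  then have "measure lebesgue ((*v) A ` cball 0 1) < 1"
    using assms(2) by (simp add: measure_translation)
  then obtain c where c: "c \<in> int_vectors" "c \<noteq> 0" "norm (transpose A *v c) \<le> CARD('n) / 2"
    by (rule exists_nonzero_int_vector_transpose_norm_le[OF assms(1)])
  have "compact (ellipsoid A a)"
    unfolding E by (intro compact_translation compact_matrix_vector_image compact_cball)
  then have "lattice_width (ellipsoid A a) \<le> width_dir (ellipsoid A a) c"
    using c by (intro lattice_width_le_width_dir) (auto simp: E compact_imp_bounded)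
  also have "\<dots> \<le> 2 * norm (transpose A *v c)"
    unfolding ellipsoid_eq_image_cball[OF assms(1)] by (rule width_dir_affine_image_cball)
  also have "\<dots> \<le> real CARD('n)"
    using c by simp
  finally show ?thesis .
qed

end
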